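(* Let $K,G,m_0,A_g,B_g,\bar f_c,\bar f_t>0$, $e\in[0.5,1]$, $m_g'(p)=A_g e^{\frac{p-\bar f_t/3}{B_g\bar f_c}}$, and $\hat f(p,\varrho,\varrho_e)=\frac32\left(\frac{\varrho}{\bar f_c}\right)^2+m_0\left(\frac{\varrho_e}{\sqrt6\bar f_c}+\frac{p}{\bar f_c}\right)-1$. Let $\boldsymbol\sigma^{tr}\in\mathbb R^{3\times3}_{sym}$ with $p^{tr}=p(\boldsymbol\sigma^{tr})$, $\varrho^{tr}=\varrho(\boldsymbol\sigma^{tr})$, $r_e^{tr}=r_e(\cos\theta(\boldsymbol\sigma^{tr}))$, $\varrho_e^{tr}=\varrho_e(\boldsymbol\sigma^{tr})$. For $\gamma\ge0$ let $\hat p_{tr}(\gamma)$ be the unique real $p_\gamma$ with $p_\gamma+\gamma K m_g'(p_\gamma)/\bar f_c=p^{tr}$, let $\hat\varrho_{tr}(\gamma)$ be the unique real $\varrho_\gamma$ with $\varrho_\gamma=\big[\varrho^{tr}-\gamma2G\big(\frac{3\varrho_\gamma}{\bar f_c^2}+\frac{m_0}{\sqrt6\bar f_c}\big)\big]^+$, and $$q_{tr}(\gamma)=\frac32\Big(\frac{\hat\varrho_{tr}(\gamma)}{\bar f_c}\Big)^2+m_0\Big(\frac{\hat\varrho_{tr}(\gamma)r_e^{tr}}{\sqrt6\bar f_c}+\frac{\hat p_{tr}(\gamma)}{\bar f_c}\Big)-1.$$ Assume $\hat f(p^{tr},\varrho^{tr},\varrho_e^{tr})>0$. Then there exists a unique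 $\triangle\lambda>0$ with $q_{tr}(\triangle\lambda)=0$. Furthermore, each of the following problems has a unique solution: (R) find $(p,\varrho,\triangle\lambda)$ with $p=p^{tr}-\triangle\lambda K\frac{m_g'(p)}{\bar f_c}$, $\varrho=\big[\varrho^{tr}-\triangle\lambda2G\big(\frac{3\varrho}{\bar f_c^2}+\frac{m_0}{\sqrt6\bar f_c}\big)\big]^+$, $\hat f(p,\varrho,\varrho r_e^{tr})=0$; (P) find $(\boldsymbol\sigma,\triangle\lambda)$ with $\boldsymbol\sigma=\boldsymbol\sigma^{tr}-\triangle\lambda\big[K\frac{m_g'(p(\boldsymbol\sigma))}{\bar f_c}\mathbf I+2G\big(\frac{3\varrho(\boldsymbol\sigma)}{\bar f_c^2}+\frac{m_0}{\sqrt6\bar f_c}\big)\hat{\mathbf n}\big]$ for some $\hat{\mathbf n}\in\partial\varrho(\boldsymbol\sigma)$, $\triangle\lambda\ge0$, $\hat f(p(\boldsymbol\sigma),\varrho(\boldsymbol\sigma),\varrho_e(\boldsymbol\sigma))\le0$, $\triangle\lambda\hat f(p(\boldsymbol\sigma),\varrho(\boldsymbol\sigma),\varrho_e(\boldsymbol\sigma))=0$. In addition, if $q_{tr}\big(\sqrt6\bar f_c\varrho^{tr}/(2Gm_0)\big)<0$ then $\triangle\lambda\in\big(0,\sqrt6\bar f_c\varrho^{tr}/(2Gm_0)\big)$ and $\varrho>0$; conversely, if $q_{tr}\big(\sqrt6\bar f_c\varrho^{tr}/(2Gm_0)\big)\ge0$ then $\triangle\lambda\ge\sqrt6\bar f_c\varrho^{tr}/(2Gm_0)$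 and $\varrho=0$ (with $\varrho$ the corresponding component of the solution of (R)).
   Context: $\mathbb R^{3\times3}_{sym}$: real symmetric $3\times3$ matrices with Frobenius product ":" and norm; $\mathbf I$ identity; $p(\boldsymbol\sigma)=\frac13\mathbf I:\boldsymbol\sigma$, $\mathbf s(\boldsymbol\sigma)=\boldsymbol\sigma-p(\boldsymbol\sigma)\mathbf I$, $\varrho(\boldsymbol\sigma)=\|\mathbf s(\boldsymbol\sigma)\|$; for $\varrho(\boldsymbol\sigma)>0$, $\theta(\boldsymbol\sigma)=\frac13\arccos\big(\frac{3\sqrt3}{2}J_3/J_2^{3/2}\big)$ with $J_2=\frac12\mathbf s:\mathbf s$, $J_3=\frac13\mathbf s^3:\mathbf I$. $r_e(\cos\theta)=\frac{4(1-e^2)\cos^2\theta+(2e-1)^2}{2(1-e^2)\cos\theta+(2e-1)\sqrt{4(1-e^2)\cos^2\theta+5e^2-4e}}$; $\varrho_e(\boldsymbol\sigma)=\varrho(\boldsymbol\sigma)r_e(\cos\theta(\boldsymbol\sigma))$ if $\varrho(\boldsymbol\sigma)>0$ and $0$ otherwise. When $\varrho^{tr}=0$, products of the form $(\cdot)\,r_e^{tr}$ with a vanishing factor are interpreted as $0$. $(x)^+=\max\{0,x\}$. $\partial\varrho(\boldsymbol\sigma)=\{\mathbf s(\boldsymbol\sigma)/\varrho(\boldsymbol\sigma)\}$ if $\varrho(\boldsymbol\sigma)>0$, and $\{\hat{\mathbf n}\in\mathbb R^{3\times3}_{sym}:\mathbf I:\hat{\mathbf n}=0,\|\hat{\mathbf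 n}\|\le1\}$ if $\varrho(\boldsymbol\sigma)=0$. *)

theory Defs
  imports "HOL-Analysis.Analysis"
begin

type_synonym mat3 = "real^3^3"

definition Sym :: "mat3 set" where "Sym = {A. transpose A = A}"

definition frob :: "mat3 \<Rightarrow> mat3 \<Rightarrow> real" where
  "frob A B = (\<Sum>i\<in>UNIV. \<Sum>j\<in>UNIV. A$i$j * B$i$j)"

definition fnorm :: "mat3 \<Rightarrow> real" where "fnorm A = sqrt (frob A A)"

definition Id3 :: mat3 where "Id3 = mat 1"

definition pm :: "mat3 \<Rightarrow> real" where "pm \<sigma> = frob Id3 \<sigma> / 3"

definition dev :: "mat3 \<Rightarrow> mat3" where "dev \<sigma> = \<sigma> - pm \<sigma> *\<^sub>R Id3"

definition rho :: "mat3 \<Rightarrow> real" where "rho \<sigma> = fnorm (dev \<sigma>)"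

definition J2 :: "mat3 \<Rightarrow> real" where "J2 \<sigma> = frob (dev \<sigma>) (dev \<sigma>) / 2"

definition J3 :: "mat3 \<Rightarrow> real" where
  "J3 \<sigma> = frob (dev \<sigma> ** dev \<sigma> ** dev \<sigma>) Id3 / 3"

definition theta :: "mat3 \<Rightarrow> real" where
  "theta \<sigma> = arccos (3 * sqrt 3 / 2 * J3 \<sigma> / (J2 \<sigma> powr (3/2))) / 3"

definition r_e :: "real \<Rightarrow> real \<Rightarrow> real" where
  "r_e e c = (4 * (1 - e^2) * c^2 + (2*e - 1)^2) /
             (2 * (1 - e^2) * c + (2*e - 1) * sqrt (4 * (1 - e^2) * c^2 + 5 * e^2 - 4 * e))"

definition rho_e :: "real \<Rightarrow> mat3 \<Rightarrow> real" where
  "rho_e e \<sigma> = (if rho \<sigma> > 0 then rho \<sigma> * r_e e (cos (theta \<sigma>)) else 0)"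

text \<open>r_e^tr; when rho(sigma^tr) = 0 it only occurs in products with a vanishing factor,
  which are interpreted as 0; we set it to 0 in that case.\<close>
definition r_e_tr :: "real \<Rightarrow> mat3 \<Rightarrow> real" where
  "r_e_tr e \<sigma> = (if rho \<sigma> > 0 then r_e e (cos (theta \<sigma>)) else 0)"

definition subdiff_rho :: "mat3 \<Rightarrow> mat3 set" where
  "subdiff_rho \<sigma> = (if rho \<sigma> > 0 then {(1 / rho \<sigma>) *\<^sub>R dev \<sigma>}
      else {n \<in> Sym. frob Id3 n = 0 \<and> fnorm n \<le> 1})"

definition pos :: "real \<Rightarrow> real" where "pos x = max 0 x"

definition mg' :: "real \<Rightarrow> real \<Rightarrow> real \<Rightarrow> real \<Rightarrow> real \<Rightarrow> real" where
  "mg' Ag Bg fc ft p = Ag * exp ((p - ft / 3) / (Bg * fc))"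

definition fhat :: "real \<Rightarrow> real \<Rightarrow> real \<Rightarrow> real \<Rightarrow> real \<Rightarrow> real" where
  "fhat m0 fc p \<rho> \<rho>e = 3/2 * (\<rho> / fc)^2 + m0 * (\<rho>e / (sqrt 6 * fc) + p / fc) - 1"

definition phat_tr :: "real \<Rightarrow> real \<Rightarrow> real \<Rightarrow> real \<Rightarrow> real \<Rightarrow> real \<Rightarrow> real \<Rightarrow> real" where
  "phat_tr K Ag Bg fc ft ptr \<gamma> = (THE x. x + \<gamma> * K * mg' Ag Bg fc ft x / fc = ptr)"

definition rhohat_tr :: "real \<Rightarrow> real \<Rightarrow> real \<Rightarrow> real \<Rightarrow> real \<Rightarrow> real" where
  "rhohat_tr G m0 fc rtr \<gamma> =
     (THE x. x = pos (rtr - \<gamma> * 2 * G * (3 * x / fc^2 + m0 / (sqrt 6 * fc))))"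

definition q_tr :: "real \<Rightarrow> real \<Rightarrow> real \<Rightarrow> real \<Rightarrow> real \<Rightarrow> real \<Rightarrow> real \<Rightarrow> real
                    \<Rightarrow> mat3 \<Rightarrow> real \<Rightarrow> real" where
  "q_tr K G m0 Ag Bg fc ft e \<sigma>tr \<gamma> =
     (let r = rhohat_tr G m0 fc (rho \<sigma>tr) \<gamma>; p = phat_tr K Ag Bg fc ft (pm \<sigma>tr) \<gamma>
      in 3/2 * (r / fc)^2 + m0 * (r * r_e_tr e \<sigma>tr / (sqrt 6 * fc) + p / fc) - 1)"

definition probR :: "real \<Rightarrow> real \<Rightarrow> real \<Rightarrow> real \<Rightarrow> real \<Rightarrow> real \<Rightarrow> real \<Rightarrow> real
                    \<Rightarrow> mat3 \<Rightarrow> real \<Rightarrow> real \<Rightarrow> real \<Rightarrow> bool" where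
  "probR K G m0 Ag Bg fc ft e \<sigma>tr p \<rho> dl \<longleftrightarrow>
     p = pm \<sigma>tr - dl * K * mg' Ag Bg fc ft p / fc \<and>
     \<rho> = pos (rho \<sigma>tr - dl * 2 * G * (3 * \<rho> / fc^2 + m0 / (sqrt 6 * fc))) \<and>
     fhat m0 fc p \<rho> (\<rho> * r_e_tr e \<sigma>tr) = 0"

definition probP :: "real \<Rightarrow> real \<Rightarrow> real \<Rightarrow> real \<Rightarrow> real \<Rightarrow> real \<Rightarrow> real \<Rightarrow> real
                    \<Rightarrow> mat3 \<Rightarrow> mat3 \<Rightarrow> real \<Rightarrow> bool" where
  "probP K G m0 Ag Bg fc ft e \<sigma>tr \<sigma> dl \<longleftrightarrow>
     \<sigma> \<in> Sym \<and>
     (\<exists>n \<in> subdiff_rho \<sigma>.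
        \<sigma> = \<sigma>tr - dl *\<^sub>R (( K * mg' Ag Bg fc ft (pm \<sigma>) / fc) *\<^sub>R Id3
              + (2 * G * (3 * rho \<sigma> / fc^2 + m0 / (sqrt 6 * fc))) *\<^sub>R n)) \<and>
     dl \<ge> 0 \<and>
     fhat m0 fc (pm \<sigma>) (rho \<sigma>) (rho_e e \<sigma>) \<le> 0 \<and>
     dl * fhat m0 fc (pm \<sigma>) (rho \<sigma>) (rho_e e \<sigma>) = 0"

end

theory Submission
  imports Defs
begin

text \<open>
  For a fixed multiplier \<open>\<gamma> \<ge> 0\<close> the equations of problem (R) decouple. The pressure
  equation has a unique root \<open>p\<^sub>\<gamma>\<close>, strictly decreasing in \<open>\<gamma>\<close> because \<open>m\<^sub>g'\<close> is
  positive and increasing; the radius equation is a clipped affine fixed point with the explicit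
  solution \<open>[\<rho>\<^sup>t\<^sup>r - \<gamma> b]\<^sup>+ / (1 + \<gamma> a)\<close>, \<open>a = 6G/f\<^sub>c\<^sup>2\<close>, \<open>b = 2G m\<^sub>0/(\<surd>6 f\<^sub>c)\<close>,
  nonincreasing in \<open>\<gamma>\<close> and zero exactly from the apex multiplier \<open>\<rho>\<^sup>t\<^sup>r/b\<close> on.
  Since \<open>r\<^sub>e\<^sup>t\<^sup>r \<ge> 0\<close> (Cauchy--Schwarz puts the Lode angle in \<open>[0, \<pi>/3]\<close>), the
  yield function along these solutions, \<open>q\<^sub>t\<^sub>r\<close>, is strictly decreasing; it is positive at
  \<open>\<gamma> = 0\<close> by the trial yield condition and negative for large \<open>\<gamma>\<close>. Problem (P) reduces to (R): the flow
  direction is a nonnegative multiple of \<open>dev \<sigma>\<^sup>t\<^sup>r\<close>, so the solution is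
  \<open>\<sigma> = p I + (\<rho>/\<rho>\<^sup>t\<^sup>r) dev \<sigma>\<^sup>t\<^sup>r\<close>, which keeps the Lode angle of the trial stress.
\<close>

section \<open>Pressure and deviator\<close>

lemma frob_eq_inner: "frob A B = A \<bullet> B"
  by (simp add: frob_def inner_vec_def)

lemma fnorm_eq_norm: "fnorm A = norm A"
  by (simp add: fnorm_def frob_eq_inner norm_eq_sqrt_inner)

lemma rho_eq_norm_dev: "rho A = norm (dev A)"
  by (simp add: rho_def fnorm_eq_norm)

lemma rho_nonneg: "rho A \<ge> 0"
  by (simp add: rho_eq_norm_dev)

lemma pm_Id3 [simp]: "pm Id3 = 1"
  by (simp add: pm_def frob_def sum_3 Id3_def mat_def)

lemma pm_add: "pm (A + B) = pm A + pm B"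
  by (simp add: pm_def frob_eq_inner inner_add_right add_divide_distrib)

lemma pm_diff: "pm (A - B) = pm A - pm B"
  by (simp add: pm_def frob_eq_inner inner_diff_right diff_divide_distrib)

lemma pm_scaleR: "pm (k *\<^sub>R A) = k * pm A"
  by (simp add: pm_def frob_eq_inner)

lemma pm_zero [simp]: "pm 0 = 0"
  by (simp add: pm_def frob_def)

lemma pm_dev [simp]: "pm (dev A) = 0"
  by (simp add: dev_def pm_diff pm_scaleR)

lemma dev_add: "dev (A + B) = dev A + dev B"
  by (simp add: dev_def pm_add algebra_simps)

lemma dev_diff: "dev (A - B) = dev A - dev B"
  by (simp add: dev_def pm_diff algebra_simps)

lemma dev_scaleR: "dev (k *\<^sub>R A) = k *\<^sub>R dev A"
  by (simp add: dev_def pm_scaleR algebra_simps)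

lemma dev_Id3 [simp]: "dev Id3 = 0"
  by (simp add: dev_def)

lemma dev_eq_self: "pm A = 0 \<Longrightarrow> dev A = A"
  by (simp add: dev_def)

lemma pm_dev_decomp: "A = pm A *\<^sub>R Id3 + dev A"
  by (simp add: dev_def)

lemma Id3_Sym: "Id3 \<in> Sym"
  by (simp add: Sym_def Id3_def)

lemma Sym_add: "A \<in> Sym \<Longrightarrow> B \<in> Sym \<Longrightarrow> A + B \<in> Sym"
  by (simp add: Sym_def transpose_def vec_eq_iff)

lemma Sym_scaleR: "A \<in> Sym \<Longrightarrow> k *\<^sub>R A \<in> Sym"
  by (simp add: Sym_def transpose_scalar)

lemma Sym_dev: "A \<in> Sym \<Longrightarrow> dev A \<in> Sym"
  by (simp add: Sym_def dev_def transpose_def vec_eq_iff Id3_def mat_def)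

section \<open>The Lode angle\<close>

lemma Sym_entry: "A \<in> Sym \<Longrightarrow> A$j$i = A$i$j"
proof -
  assume "A \<in> Sym"
  then have "transpose A $ i $ j = A $ i $ j"
    by (simp add: Sym_def)
  then show ?thesis
    by (simp add: transpose_def)
qed

text \<open>Cauchy--Schwarz against \<open>s\<^sup>2 - (|s|\<^sup>2/3) I\<close>, whose squared norm is \<open>|s|\<^sup>4/6\<close>
  for traceless symmetric \<open>s\<close>.\<close>
lemma traceless_Sym_cube_trace_sq_le:
  assumes "s \<in> Sym" "frob Id3 s = 0"
  shows "(frob (s ** s ** s) Id3)\<^sup>2 \<le> (frob s s)^3 / 6"
proof -
  define a where "a = s$1$1"
  define b where "b = s$2$2"
  define d where "d = s$1$2"
  define e where "e = s$1$3"
  define f where "f = s$2$3"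
  have s_sym: "s$2$1 = d" "s$3$1 = e" "s$3$2 = f"
    using Sym_entry[OF assms(1)] by (auto simp: d_def e_def f_def)
  have s33: "s$3$3 = - a - b"
    using assms(2) by (simp add: frob_def sum_3 Id3_def mat_def a_def b_def)
  define W where "W = s ** s - (frob s s / 3) *\<^sub>R Id3"
  have sW: "s \<bullet> W = frob (s ** s ** s) Id3"
    unfolding W_def frob_def
    by (simp add: inner_vec_def sum_3 Id3_def mat_def matrix_matrix_mult_def s_sym s33
        flip: a_def b_def d_def e_def f_def; algebra)
  have WW: "W \<bullet> W = (frob s s)\<^sup>2 / 6"
    unfolding W_def frob_def
    by (simp add: inner_vec_def sum_3 Id3_def mat_def matrix_matrix_mult_def s_sym s33
        flip: a_def b_def d_def e_def f_def; algebra)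
  have "(s \<bullet> W)\<^sup>2 \<le> (s \<bullet> s) * (W \<bullet> W)"
    by (rule Cauchy_Schwarz_ineq)
  then have "(frob (s ** s ** s) Id3)\<^sup>2 \<le> frob s s * ((frob s s)\<^sup>2 / 6)"
    by (simp only: sW WW frob_eq_inner)
  then show ?thesis
    by (simp add: power2_eq_square power3_eq_cube)
qed

lemma J2_eq_rho_sq: "J2 A = (rho A)\<^sup>2 / 2"
  by (simp add: J2_def rho_eq_norm_dev frob_eq_inner power2_norm_eq_inner)

lemma cos_theta_ge_half:
  assumes "A \<in> Sym" "rho A > 0"
  shows "1/2 \<le> cos (theta A)"
proof -
  define t3 where "t3 = frob (dev A ** dev A ** dev A) Id3"
  have t3_sq: "t3\<^sup>2 \<le> (rho A)^6 / 6"
    using traceless_Sym_cube_trace_sq_le[OF Sym_dev[OF assms(1)]] pm_dev[of A]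
    by (simp add: t3_def pm_def frob_eq_inner rho_eq_norm_dev flip: power2_norm_eq_inner)
  define x where "x = 3 * sqrt 3 / 2 * J3 A / (J2 A powr (3/2))"
  have "(J2 A powr (3/2))\<^sup>2 = J2 A powr 3"
    by (simp add: power2_eq_square flip: powr_add)
  also have "\<dots> = ((rho A)\<^sup>2 / 2)^3"
    using assms(2) by (simp add: J2_eq_rho_sq powr_realpow)
  finally have J2_powr_sq: "(J2 A powr (3/2))\<^sup>2 = ((rho A)\<^sup>2 / 2)^3" .
  have "x\<^sup>2 = 27/4 * (t3/3)\<^sup>2 / (J2 A powr (3/2))\<^sup>2"
    by (simp add: x_def J3_def t3_def power_divide power_mult_distrib)
  also have "\<dots> = 6 * t3\<^sup>2 / (rho A)^6"
    unfolding J2_powr_sq by (simp add: power_divide field_simps)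
  also have "\<dots> \<le> 1"
    using t3_sq assms(2) by (simp add: divide_le_eq)
  finally have "-1 \<le> x \<and> x \<le> 1"
    using abs_le_square_iff[of x 1] by auto
  then have "0 \<le> theta A" "theta A \<le> pi/3"
    using arccos_bounded[of x] by (auto simp: theta_def x_def)
  then have "cos (pi/3) \<le> cos (theta A)"
    by (intro cos_monotone_0_pi_le) auto
  then show ?thesis
    by (simp add: cos_60)
qed

lemma theta_eq_if_dev_scaleR:
  assumes "dev A = k *\<^sub>R dev B" "k > 0"
  shows "theta A = theta B"
proof -
  have cube: "(k *\<^sub>R X) ** (k *\<^sub>R X) ** (k *\<^sub>R X) = k^3 *\<^sub>R (X ** X ** X)" for X :: mat3
    by (simp add: scalar_matrix_assoc matrix_scalar_ac power3_eq_cube mult_ac)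
  have "(k\<^sup>2) powr (3/2) = (k powr real 2) powr (3/2)"
    using assms(2) by (simp only: powr_realpow)
  also have "\<dots> = k powr real 3"
    by (simp add: powr_powr)
  also have "\<dots> = k^3"
    using assms(2) by (simp only: powr_realpow)
  finally have "(k\<^sup>2) powr (3/2) = k^3" .
  moreover have "J2 A = k\<^sup>2 * J2 B"
    using assms(1) by (simp add: J2_def frob_eq_inner power2_eq_square)
  moreover have "J2 B \<ge> 0"
    by (simp add: J2_eq_rho_sq)
  ultimately have "J2 A powr (3/2) = k^3 * J2 B powr (3/2)"
    by (simp add: powr_mult)
  moreover have "J3 A = k^3 * J3 B"
    using assms(1) by (simp add: J3_def frob_eq_inner cube)
  ultimately show ?thesis
    using assms(2) by (simp add: theta_def mult.assoc)
qed

lemma r_e_nonneg: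
  assumes "1/2 \<le> e" "e \<le> 1" "1/2 \<le> c"
  shows "r_e e c \<ge> 0"
proof -
  have "c\<^sup>2 \<ge> 1/4"
    using power_mono[of "1/2" c 2] assms(3) by (simp add: power2_eq_square)
  moreover have "1 - e\<^sup>2 \<ge> 0"
    using assms by (simp add: power_le_one)
  ultimately have "4 * (1 - e\<^sup>2) * c\<^sup>2 \<ge> 1 - e\<^sup>2"
    using mult_left_mono[of "1/4" "c\<^sup>2" "1 - e\<^sup>2"] by (simp add: algebra_simps)
  then have "4 * (1 - e\<^sup>2) * c\<^sup>2 + 5 * e\<^sup>2 - 4 * e \<ge> (2*e - 1)\<^sup>2"
    by (simp add: power2_eq_square algebra_simps)
  then have "4 * (1 - e\<^sup>2) * c\<^sup>2 + 5 * e\<^sup>2 - 4 * e \<ge> 0"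
    by (smt (verit) zero_le_power2)
  with \<open>1 - e\<^sup>2 \<ge> 0\<close> assms show ?thesis
    unfolding r_e_def by (intro divide_nonneg_nonneg add_nonneg_nonneg mult_nonneg_nonneg) auto
qed

lemma r_e_tr_nonneg:
  assumes "1/2 \<le> e" "e \<le> 1" "A \<in> Sym"
  shows "r_e_tr e A \<ge> 0"
  using assms cos_theta_ge_half[OF assms(3)] r_e_nonneg by (simp add: r_e_tr_def)

lemma rho_e_eq_r_e_tr: "rho_e e A = rho A * r_e_tr e A"
  by (simp add: rho_e_def r_e_tr_def)

section \<open>The scalar return mapping\<close>

lemma add_scaled_mono_ex1:
  fixes g :: "real \<Rightarrow> real"
  assumes "mono g" "\<And>x. g x > 0" "continuous_on UNIV g" "c \<ge> 0"
  shows "\<exists>!x. x + c * g x = y"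
proof -
  let ?f = "\<lambda>x. x + c * g x"
  have strict: "?f x < ?f x'" if "x < x'" for x x'
    using that assms(1,4) by (simp add: add_less_le_mono mono_def mult_left_mono)
  define a where "a = y - c * g y"
  have "a \<le> y"
    using assms(2,4) by (simp add: a_def less_imp_le)
  then have "?f a \<le> y"
    using assms(1,4) by (simp add: a_def mono_def mult_left_mono)
  moreover have "y \<le> ?f y"
    using assms(2,4) by (simp add: less_imp_le)
  moreover have "continuous_on {a..y} ?f"
    using assms(3) by (intro continuous_intros) (auto intro: continuous_on_subset)
  ultimately obtain x where "?f x = y"
    using IVT'[of ?f a y y] \<open>a \<le> y\<close> by blast
  moreover have "x' = x" if "?f x' = y" "?f x = y" for x'
    using strict[of x x'] strict[of x' x] that by (cases x x' rule: linorder_cases) auto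
  ultimately show ?thesis
    by blast
qed

lemma add_scaled_mono_root_strict_antimono:
  fixes g :: "real \<Rightarrow> real"
  assumes "mono g" "\<And>x. g x > 0" "0 \<le> c1" "c1 < c2"
    and "x1 + c1 * g x1 = y" "x2 + c2 * g x2 = y"
  shows "x2 < x1"
proof (rule ccontr)
  assume "\<not> x2 < x1"
  then have "c1 * g x1 \<le> c1 * g x2"
    using assms(1,3) by (simp add: mono_def mult_left_mono)
  also have "\<dots> < c2 * g x2"
    using assms(2,4) by simp
  finally show False
    using assms(5,6) \<open>\<not> x2 < x1\<close> by linarith
qed

lemma eq_max_0_affine_iff:
  fixes a b r x :: real
  assumes "a \<ge> 0"
  shows "x = max 0 (r - (a * x + b)) \<longleftrightarrow> x = max 0 (r - b) / (1 + a)"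
proof (cases "r \<le> b")
  case True
  then have "x = max 0 (r - (a * x + b)) \<longleftrightarrow> x = 0"
    using assms mult_nonneg_nonneg[of a x] by (smt (verit))
  with True show ?thesis
    by simp
next
  case False
  have "x = max 0 (r - (a * x + b)) \<longleftrightarrow> x * (1 + a) = r - b"
  proof
    assume x: "x = max 0 (r - (a * x + b))"
    with False have "x \<noteq> 0"
      by auto
    with x show "x * (1 + a) = r - b"
      by (auto simp: max_def algebra_simps split: if_splits)
  next
    assume x: "x * (1 + a) = r - b"
    with False assms have "x > 0"
      by (smt (verit) mult_nonpos_nonneg)
    with x show "x = max 0 (r - (a * x + b))"
      by (auto simp: algebra_simps)
  qed
  with False assms show ?thesis
    by (simp add: field_simps)
qed

locale material_params =
  fixes K G m0 Ag Bg fc ft :: real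
  assumes K_pos: "K > 0" and G_pos: "G > 0" and m0_pos: "m0 > 0"
    and Ag_pos: "Ag > 0" and Bg_pos: "Bg > 0" and fc_pos: "fc > 0"
begin

lemma mg'_pos: "mg' Ag Bg fc ft x > 0"
  using Ag_pos by (simp add: mg'_def)

lemma mono_mg': "mono (mg' Ag Bg fc ft)"
  using Ag_pos Bg_pos fc_pos by (auto intro!: monoI simp: mg'_def divide_right_mono)

lemma continuous_on_mg': "continuous_on S (mg' Ag Bg fc ft)"
  unfolding mg'_def using Bg_pos fc_pos by (intro continuous_intros) auto

lemma pressure_eq_iff: "x + \<gamma> * K * mg' Ag Bg fc ft x / fc = ptr \<longleftrightarrow> x + \<gamma> * K / fc * mg' Ag Bg fc ft x = ptr"
  by (simp add: field_simps)

lemma phat_tr_ex1: "\<gamma> \<ge> 0 \<Longrightarrow> \<exists>!x. x + \<gamma> * K * mg' Ag Bg fc ft x / fc = ptr"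
  unfolding pressure_eq_iff
  using K_pos fc_pos by (intro add_scaled_mono_ex1 mono_mg' mg'_pos continuous_on_mg') auto

lemma phat_tr_eq:
  "\<gamma> \<ge> 0 \<Longrightarrow> phat_tr K Ag Bg fc ft ptr \<gamma> + \<gamma> * K * mg' Ag Bg fc ft (phat_tr K Ag Bg fc ft ptr \<gamma>) / fc = ptr"
  unfolding phat_tr_def by (rule theI'[OF phat_tr_ex1])

lemma phat_tr_unique:
  "\<gamma> \<ge> 0 \<Longrightarrow> x + \<gamma> * K * mg' Ag Bg fc ft x / fc = ptr \<Longrightarrow> phat_tr K Ag Bg fc ft ptr \<gamma> = x"
  unfolding phat_tr_def by (rule the1_equality[OF phat_tr_ex1])

lemma phat_tr_0: "phat_tr K Ag Bg fc ft ptr 0 = ptr"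
  by (rule phat_tr_unique) auto

lemma phat_tr_strict_antimono:
  assumes "0 \<le> \<gamma>1" "\<gamma>1 < \<gamma>2"
  shows "phat_tr K Ag Bg fc ft ptr \<gamma>2 < phat_tr K Ag Bg fc ft ptr \<gamma>1"
proof (rule add_scaled_mono_root_strict_antimono[OF mono_mg' mg'_pos])
  show "0 \<le> \<gamma>1 * K / fc" "\<gamma>1 * K / fc < \<gamma>2 * K / fc"
    using assms K_pos fc_pos by (auto simp: divide_strict_right_mono)
  show "phat_tr K Ag Bg fc ft ptr \<gamma>1 + \<gamma>1 * K / fc * mg' Ag Bg fc ft (phat_tr K Ag Bg fc ft ptr \<gamma>1) = ptr"
    "phat_tr K Ag Bg fc ft ptr \<gamma>2 + \<gamma>2 * K / fc * mg' Ag Bg fc ft (phat_tr K Ag Bg fc ft ptr \<gamma>2) = ptr"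
    using assms phat_tr_eq by (simp_all flip: pressure_eq_iff)
qed

lemma phat_tr_at_multiplier:
  assumes "p \<le> ptr"
  shows "phat_tr K Ag Bg fc ft ptr ((ptr - p) * fc / (K * mg' Ag Bg fc ft p)) = p"
proof (rule phat_tr_unique)
  show "(ptr - p) * fc / (K * mg' Ag Bg fc ft p) \<ge> 0"
    using assms K_pos fc_pos mg'_pos[of p] by simp
  show "p + (ptr - p) * fc / (K * mg' Ag Bg fc ft p) * K * mg' Ag Bg fc ft p / fc = ptr"
    using K_pos fc_pos mg'_pos[of p] by simp
qed

definition rho_return :: "real \<Rightarrow> real \<Rightarrow> real" where
  "rho_return rtr \<gamma> = max 0 (rtr - \<gamma> * (2 * G * m0 / (sqrt 6 * fc))) / (1 + \<gamma> * (6 * G / fc\<^sup>2))"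

definition apex_multiplier :: "real \<Rightarrow> real" where
  "apex_multiplier rtr = sqrt 6 * fc * rtr / (2 * G * m0)"

lemma apex_multiplier_nonneg: "rtr \<ge> 0 \<Longrightarrow> apex_multiplier rtr \<ge> 0"
  using G_pos m0_pos fc_pos by (simp add: apex_multiplier_def)

lemma radius_eq_iff_rho_return:
  assumes "\<gamma> \<ge> 0"
  shows "\<rho> = pos (rtr - \<gamma> * 2 * G * (3 * \<rho> / fc\<^sup>2 + m0 / (sqrt 6 * fc))) \<longleftrightarrow> \<rho> = rho_return rtr \<gamma>"
proof -
  define a b where "a = \<gamma> * (6 * G / fc\<^sup>2)" and "b = \<gamma> * (2 * G * m0 / (sqrt 6 * fc))"
  have "\<gamma> * 2 * G * (3 * \<rho> / fc\<^sup>2 + m0 / (sqrt 6 * fc)) = a * \<rho> + b"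
    by (simp add: a_def b_def algebra_simps)
  moreover have "a \<ge> 0"
    using assms G_pos by (simp add: a_def)
  ultimately show ?thesis
    unfolding pos_def rho_return_def a_def[symmetric] b_def[symmetric]
    by (simp only: eq_max_0_affine_iff)
qed

lemma rhohat_tr_eq_rho_return: "\<gamma> \<ge> 0 \<Longrightarrow> rhohat_tr G m0 fc rtr \<gamma> = rho_return rtr \<gamma>"
  by (simp add: rhohat_tr_def radius_eq_iff_rho_return)

lemma rho_return_nonneg: "\<gamma> \<ge> 0 \<Longrightarrow> rho_return rtr \<gamma> \<ge> 0"
  using G_pos by (simp add: rho_return_def)

lemma rho_return_0: "rtr \<ge> 0 \<Longrightarrow> rho_return rtr 0 = rtr"
  by (simp add: rho_return_def)

lemma rho_return_antimono:
  assumes "0 \<le> \<gamma>1" "\<gamma>1 \<le> \<gamma>2"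
  shows "rho_return rtr \<gamma>2 \<le> rho_return rtr \<gamma>1"
proof -
  define a b where "a = 6 * G / fc\<^sup>2" and "b = 2 * G * m0 / (sqrt 6 * fc)"
  have "a \<ge> 0" "b \<ge> 0"
    using G_pos m0_pos fc_pos by (auto simp: a_def b_def)
  moreover have "\<gamma>1 * b \<le> \<gamma>2 * b" "\<gamma>1 * a \<le> \<gamma>2 * a"
    using assms \<open>a \<ge> 0\<close> \<open>b \<ge> 0\<close> by (auto intro: mult_right_mono)
  ultimately have "max 0 (rtr - \<gamma>2 * b) / (1 + \<gamma>2 * a) \<le> max 0 (rtr - \<gamma>1 * b) / (1 + \<gamma>2 * a)"
    using assms by (intro divide_right_mono) auto
  also have "\<dots> \<le> max 0 (rtr - \<gamma>1 * b) / (1 + \<gamma>1 * a)"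
    using assms \<open>a \<ge> 0\<close> \<open>\<gamma>1 * a \<le> \<gamma>2 * a\<close>
    by (intro divide_left_mono mult_pos_pos add_pos_nonneg) auto
  finally show ?thesis
    by (simp add: rho_return_def a_def b_def)
qed

lemma rho_return_eq_0_iff:
  assumes "\<gamma> \<ge> 0"
  shows "rho_return rtr \<gamma> = 0 \<longleftrightarrow> apex_multiplier rtr \<le> \<gamma>"
proof -
  define b where "b = 2 * G * m0 / (sqrt 6 * fc)"
  have "b > 0"
    using G_pos m0_pos fc_pos by (simp add: b_def)
  have "1 + \<gamma> * (6 * G / fc\<^sup>2) > 0"
    using assms G_pos by (simp add: add_pos_nonneg)
  then have "rho_return rtr \<gamma> = 0 \<longleftrightarrow> rtr \<le> \<gamma> * b"
    unfolding rho_return_def b_def[symmetric] by auto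
  also have "\<dots> \<longleftrightarrow> rtr / b \<le> \<gamma>"
    using \<open>b > 0\<close> by (simp add: divide_le_eq)
  finally show ?thesis
    by (simp add: apex_multiplier_def b_def field_simps)
qed

lemma fhat_mono:
  assumes "p \<le> p'" "0 \<le> \<rho>" "\<rho> \<le> \<rho>'" "r \<ge> 0"
  shows "fhat m0 fc p \<rho> (\<rho> * r) \<le> fhat m0 fc p' \<rho>' (\<rho>' * r)"
proof -
  have "(\<rho> / fc)\<^sup>2 \<le> (\<rho>' / fc)\<^sup>2"
    using assms fc_pos by (intro power_mono divide_right_mono) auto
  moreover have "\<rho> * r / (sqrt 6 * fc) + p / fc \<le> \<rho>' * r / (sqrt 6 * fc) + p' / fc"
    using assms fc_pos by (intro add_mono divide_right_mono mult_right_mono) auto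
  then have "m0 * (\<rho> * r / (sqrt 6 * fc) + p / fc) \<le> m0 * (\<rho>' * r / (sqrt 6 * fc) + p' / fc)"
    using m0_pos by (intro mult_left_mono) auto
  ultimately show ?thesis
    unfolding fhat_def by linarith
qed

lemma fhat_strict_mono:
  assumes "p < p'" "0 \<le> \<rho>" "\<rho> \<le> \<rho>'" "r \<ge> 0"
  shows "fhat m0 fc p \<rho> (\<rho> * r) < fhat m0 fc p' \<rho>' (\<rho>' * r)"
proof -
  have "fhat m0 fc p \<rho>' (\<rho>' * r) < fhat m0 fc p' \<rho>' (\<rho>' * r)"
    using assms(1) m0_pos fc_pos by (simp add: fhat_def divide_strict_right_mono)
  with fhat_mono[of p p \<rho> \<rho>' r] assms show ?thesis
    by simp
qed

end

locale trial_scalar = material_params +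
  fixes ptr rtr r :: real
  assumes rtr_nonneg: "rtr \<ge> 0" and r_nonneg: "r \<ge> 0"
    and trial_yield_pos: "fhat m0 fc ptr rtr (rtr * r) > 0"
begin

definition yield_on_return :: "real \<Rightarrow> real" where
  "yield_on_return \<gamma> =
     fhat m0 fc (phat_tr K Ag Bg fc ft ptr \<gamma>) (rho_return rtr \<gamma>) (rho_return rtr \<gamma> * r)"

lemma yield_on_return_strict_antimono:
  "0 \<le> \<gamma>1 \<Longrightarrow> \<gamma>1 < \<gamma>2 \<Longrightarrow> yield_on_return \<gamma>2 < yield_on_return \<gamma>1"
  unfolding yield_on_return_def
  by (intro fhat_strict_mono phat_tr_strict_antimono rho_return_nonneg rho_return_antimono r_nonneg)
    auto

lemma yield_on_return_0: "yield_on_return 0 > 0"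
  using trial_yield_pos rtr_nonneg by (simp add: yield_on_return_def phat_tr_0 rho_return_0)

lemma yield_on_return_root_exists: "\<exists>dl > 0. yield_on_return dl = 0"
proof -
  text \<open>\<open>phat_tr\<close> is only implicitly defined, so rather than proving continuity in the
    multiplier we parametrize the multiplier by the pressure \<open>p \<le> ptr\<close> it produces
    (\<open>phat_tr_at_multiplier\<close>) and apply the intermediate value theorem in \<open>p\<close>.\<close>
  let ?g = "mg' Ag Bg fc ft"
  define dl_of where "dl_of p = (ptr - p) * fc / (K * ?g p)" for p
  have dl_of_nonneg: "p \<le> ptr \<Longrightarrow> dl_of p \<ge> 0" for p
    using K_pos fc_pos mg'_pos[of p] by (simp add: dl_of_def)
  define h where "h p = fhat m0 fc p (rho_return rtr (dl_of p)) (rho_return rtr (dl_of p) * r)" for p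
  have h_eq: "p \<le> ptr \<Longrightarrow> h p = yield_on_return (dl_of p)" for p
    by (simp add: h_def yield_on_return_def dl_of_def phat_tr_at_multiplier)
  define p0 where "p0 = min 0 (ptr - apex_multiplier rtr * K * ?g ptr / fc) - 1"
  have "apex_multiplier rtr * K * ?g ptr / fc \<ge> 0"
    using apex_multiplier_nonneg[OF rtr_nonneg]
      K_pos fc_pos mg'_pos[of ptr] by simp
  then have p0: "p0 < ptr" "p0 < 0" "apex_multiplier rtr * K * ?g ptr / fc \<le> ptr - p0"
    by (auto simp: p0_def)
  text \<open>At \<open>p0\<close> the multiplier exceeds the apex multiplier, so the radius vanishes and only the
    negative pressure term of the yield function remains.\<close>
  have "apex_multiplier rtr \<le> (ptr - p0) * fc / (K * ?g ptr)"
    using p0(3) K_pos fc_pos mg'_pos[of ptr] by (simp add: field_simps)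
  also have "\<dots> \<le> dl_of p0"
  proof -
    have "K * ?g p0 \<le> K * ?g ptr"
      using K_pos monoD[OF mono_mg' less_imp_le[OF p0(1)]] by simp
    moreover have "0 \<le> (ptr - p0) * fc" "0 < K * ?g ptr * (K * ?g p0)"
      using K_pos fc_pos mg'_pos p0(1) by simp_all
    ultimately show ?thesis
      unfolding dl_of_def by (rule divide_left_mono)
  qed
  finally have "rho_return rtr (dl_of p0) = 0"
    using rho_return_eq_0_iff dl_of_nonneg p0(1) by simp
  then have "h p0 < 0"
    using mult_pos_neg[OF m0_pos p0(2)] fc_pos by (simp add: h_def fhat_def)
  moreover have "h ptr > 0"
    using h_eq[of ptr] yield_on_return_0 by (simp add: dl_of_def)
  moreover have "continuous_on {p0..ptr} h"
  proof -
    have "dl_of p * (6 * G / fc\<^sup>2) \<ge> 0" if "p \<le> ptr" for p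
      using dl_of_nonneg[OF that] G_pos by simp
    then have "\<forall>p \<in> {p0..ptr}. 1 + dl_of p * (6 * G / fc\<^sup>2) \<noteq> 0"
      by (smt (verit) atLeastAtMost_iff)
    moreover have "\<forall>p \<in> {p0..ptr}. K * ?g p \<noteq> 0"
      using K_pos mg'_pos by (simp add: less_imp_neq[symmetric])
    ultimately show ?thesis
      unfolding h_def fhat_def rho_return_def dl_of_def
      by (intro continuous_intros continuous_on_mg') (use fc_pos in auto)
  qed
  ultimately obtain p where p: "p0 \<le> p" "p < ptr" "h p = 0"
    using IVT'[of h p0 0 ptr] p0(1) by (metis atLeastAtMost_iff less_eq_real_def less_irrefl)
  then have "dl_of p > 0"
    using K_pos fc_pos mg'_pos[of p] by (simp add: dl_of_def)
  with p h_eq show ?thesis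
    by auto
qed

lemma yield_on_return_ex1_root: "\<exists>!dl. dl > 0 \<and> yield_on_return dl = 0"
proof -
  obtain dl where dl: "dl > 0" "yield_on_return dl = 0"
    using yield_on_return_root_exists by blast
  moreover have "dl' = dl" if "dl' > 0" "yield_on_return dl' = 0" for dl'
    using yield_on_return_strict_antimono[of dl' dl] yield_on_return_strict_antimono[of dl dl'] that dl
    by (cases dl' dl rule: linorder_cases) auto
  ultimately show ?thesis
    by blast
qed

lemma root_less_apex_multiplier_iff:
  assumes "dl > 0" "yield_on_return dl = 0"
  shows "dl < apex_multiplier rtr \<longleftrightarrow> yield_on_return (apex_multiplier rtr) < 0"
  using assms apex_multiplier_nonneg[OF rtr_nonneg] yield_on_return_strict_antimono[of dl "apex_multiplier rtr"]
      yield_on_return_strict_antimono[of "apex_multiplier rtr" dl]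
  by (cases dl "apex_multiplier rtr" rule: linorder_cases) auto

lemma return_equations_multiplier_pos:
  assumes "p = ptr - dl * K * mg' Ag Bg fc ft p / fc"
    and "\<rho> = pos (rtr - dl * 2 * G * (3 * \<rho> / fc\<^sup>2 + m0 / (sqrt 6 * fc)))"
    and "fhat m0 fc p \<rho> (\<rho> * r) = 0"
  shows "dl > 0"
proof (rule ccontr)
  assume "\<not> dl > 0"
  then have "dl * K * mg' Ag Bg fc ft p / fc \<le> 0"
    using K_pos fc_pos mg'_pos[of p] by (simp add: mult_nonpos_nonneg divide_nonpos_pos)
  then have "ptr \<le> p"
    using assms(1) by linarith
  have "\<rho> \<ge> 0" "\<rho> \<ge> rtr - dl * 2 * G * (3 * \<rho> / fc\<^sup>2 + m0 / (sqrt 6 * fc))"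
    using assms(2) unfolding pos_def by linarith+
  moreover have "dl * 2 * G * (3 * \<rho> / fc\<^sup>2 + m0 / (sqrt 6 * fc)) \<le> 0"
    using \<open>\<not> dl > 0\<close> \<open>\<rho> \<ge> 0\<close> G_pos m0_pos fc_pos by (simp add: mult_nonpos_nonneg)
  ultimately have "rtr \<le> \<rho>"
    by linarith
  then have "fhat m0 fc ptr rtr (rtr * r) \<le> fhat m0 fc p \<rho> (\<rho> * r)"
    using fhat_mono \<open>ptr \<le> p\<close> rtr_nonneg r_nonneg by blast
  with assms(3) trial_yield_pos show False
    by simp
qed

lemma return_equations_iff:
  "(p = ptr - dl * K * mg' Ag Bg fc ft p / fc \<and>
    \<rho> = pos (rtr - dl * 2 * G * (3 * \<rho> / fc\<^sup>2 + m0 / (sqrt 6 * fc))) \<and>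
    fhat m0 fc p \<rho> (\<rho> * r) = 0)
   \<longleftrightarrow> (dl > 0 \<and> yield_on_return dl = 0 \<and>
        p = phat_tr K Ag Bg fc ft ptr dl \<and> \<rho> = rho_return rtr dl)"
proof
  assume eqs: "p = ptr - dl * K * mg' Ag Bg fc ft p / fc \<and>
    \<rho> = pos (rtr - dl * 2 * G * (3 * \<rho> / fc\<^sup>2 + m0 / (sqrt 6 * fc))) \<and>
    fhat m0 fc p \<rho> (\<rho> * r) = 0"
  then have "dl > 0"
    using return_equations_multiplier_pos by blast
  moreover have "p = phat_tr K Ag Bg fc ft ptr dl"
    using eqs \<open>dl > 0\<close> by (intro phat_tr_unique[symmetric]) auto
  moreover have "\<rho> = rho_return rtr dl"
    using eqs \<open>dl > 0\<close> radius_eq_iff_rho_return by auto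
  ultimately show "dl > 0 \<and> yield_on_return dl = 0 \<and>
      p = phat_tr K Ag Bg fc ft ptr dl \<and> \<rho> = rho_return rtr dl"
    using eqs by (simp add: yield_on_return_def)
next
  assume sol: "dl > 0 \<and> yield_on_return dl = 0 \<and>
      p = phat_tr K Ag Bg fc ft ptr dl \<and> \<rho> = rho_return rtr dl"
  then show "p = ptr - dl * K * mg' Ag Bg fc ft p / fc \<and>
    \<rho> = pos (rtr - dl * 2 * G * (3 * \<rho> / fc\<^sup>2 + m0 / (sqrt 6 * fc))) \<and>
    fhat m0 fc p \<rho> (\<rho> * r) = 0"
    using phat_tr_eq[of dl ptr] radius_eq_iff_rho_return[of dl \<rho> rtr]
    by (auto simp: yield_on_return_def eq_diff_eq)
qed

end

section \<open>Problems (R) and (P)\<close>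

definition return_stress :: "mat3 \<Rightarrow> real \<Rightarrow> real \<Rightarrow> mat3" where
  "return_stress \<sigma>tr p \<rho> = p *\<^sub>R Id3 + (if rho \<sigma>tr > 0 then (\<rho> / rho \<sigma>tr) *\<^sub>R dev \<sigma>tr else 0)"

lemma pm_return_stress: "pm (return_stress \<sigma>tr p \<rho>) = p"
  by (simp add: return_stress_def pm_add pm_scaleR)

lemma dev_return_stress:
  "dev (return_stress \<sigma>tr p \<rho>) = (if rho \<sigma>tr > 0 then (\<rho> / rho \<sigma>tr) *\<^sub>R dev \<sigma>tr else 0)"
  by (simp add: return_stress_def dev_add dev_scaleR dev_eq_self pm_scaleR)

lemma rho_return_stress:
  assumes "\<rho> \<ge> 0" "rho \<sigma>tr = 0 \<Longrightarrow> \<rho> = 0"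
  shows "rho (return_stress \<sigma>tr p \<rho>) = \<rho>"
  using assms rho_nonneg[of \<sigma>tr]
  by (auto simp: rho_eq_norm_dev dev_return_stress)

lemma Sym_return_stress: "\<sigma>tr \<in> Sym \<Longrightarrow> return_stress \<sigma>tr p \<rho> \<in> Sym"
  by (simp add: return_stress_def Sym_add Sym_scaleR Sym_dev Id3_Sym)

lemma rho_e_return_stress:
  assumes "\<rho> \<ge> 0" "rho \<sigma>tr = 0 \<Longrightarrow> \<rho> = 0"
  shows "rho_e e (return_stress \<sigma>tr p \<rho>) = \<rho> * r_e_tr e \<sigma>tr"
proof (cases "\<rho> > 0")
  case True
  with assms have "rho \<sigma>tr > 0"
    using rho_nonneg[of \<sigma>tr] by fastforce
  with True have "theta (return_stress \<sigma>tr p \<rho>) = theta \<sigma>tr"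
    by (intro theta_eq_if_dev_scaleR[where k = "\<rho> / rho \<sigma>tr"]) (simp_all add: dev_return_stress)
  with True \<open>rho \<sigma>tr > 0\<close> assms show ?thesis
    by (simp add: rho_e_def r_e_tr_def rho_return_stress)
next
  case False
  with assms show ?thesis
    by (simp add: rho_e_def rho_return_stress)
qed

lemma pm_subdiff_rho: "n \<in> subdiff_rho \<sigma> \<Longrightarrow> pm n = 0"
  unfolding subdiff_rho_def by (cases "rho \<sigma> > 0") (simp add: pm_scaleR, simp add: pm_def)

lemma flow_rule_imp_return_stress:
  assumes n: "n \<in> subdiff_rho \<sigma>" and \<sigma>: "\<sigma> = \<sigma>tr - (a *\<^sub>R Id3 + b *\<^sub>R n)" and "b \<ge> 0"
  shows "pm \<sigma> = pm \<sigma>tr - a" "rho \<sigma> = pos (rho \<sigma>tr - b)" "\<sigma> = return_stress \<sigma>tr (pm \<sigma>) (rho \<sigma>)"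
proof -
  have "pm n = 0"
    using n by (rule pm_subdiff_rho)
  then show "pm \<sigma> = pm \<sigma>tr - a"
    by (simp add: \<sigma> pm_diff pm_add pm_scaleR)
  have dev_\<sigma>: "dev \<sigma> = dev \<sigma>tr - b *\<^sub>R n"
    using \<open>pm n = 0\<close> by (simp add: \<sigma> dev_diff dev_add dev_scaleR dev_eq_self)
  have "rho \<sigma> = pos (rho \<sigma>tr - b) \<and> dev \<sigma> = (if rho \<sigma>tr > 0 then (rho \<sigma> / rho \<sigma>tr) *\<^sub>R dev \<sigma>tr else 0)"
  proof (cases "rho \<sigma> > 0")
    case True
    text \<open>The flow direction is the unit deviator of \<open>\<sigma>\<close>, so \<open>dev \<sigma>tr\<close> is a positive multiple of it.\<close>
    define k where "k = 1 + b / rho \<sigma>"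
    have "k > 0"
      using True \<open>b \<ge> 0\<close> by (simp add: k_def add_pos_nonneg)
    have "n = (1 / rho \<sigma>) *\<^sub>R dev \<sigma>"
      using n True by (simp add: subdiff_rho_def)
    have "dev \<sigma>tr = dev \<sigma> + b *\<^sub>R n"
      using dev_\<sigma> by simp
    also have "\<dots> = k *\<^sub>R dev \<sigma>"
      using \<open>n = (1 / rho \<sigma>) *\<^sub>R dev \<sigma>\<close> by (simp add: k_def scaleR_add_left)
    finally have "dev \<sigma>tr = k *\<^sub>R dev \<sigma>" .
    then have "rho \<sigma>tr = k * rho \<sigma>"
      using \<open>k > 0\<close> by (simp add: rho_eq_norm_dev)
    then have "rho \<sigma>tr = rho \<sigma> + b" "rho \<sigma>tr > 0"
      using True \<open>k > 0\<close> \<open>b \<ge> 0\<close> by (simp_all add: k_def algebra_simps)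
    with True \<open>dev \<sigma>tr = k *\<^sub>R dev \<sigma>\<close> \<open>rho \<sigma>tr = k * rho \<sigma>\<close> \<open>k > 0\<close> show ?thesis
      by (simp add: pos_def)
  next
    case False
    then have "dev \<sigma> = 0" "rho \<sigma> = 0"
      using rho_nonneg[of \<sigma>] by (simp_all add: rho_eq_norm_dev)
    moreover have "fnorm n \<le> 1"
      using n \<open>rho \<sigma> = 0\<close> by (simp add: subdiff_rho_def)
    ultimately have "rho \<sigma>tr \<le> b"
      using dev_\<sigma> \<open>b \<ge> 0\<close> by (simp add: rho_eq_norm_dev fnorm_eq_norm mult_left_le)
    with \<open>dev \<sigma> = 0\<close> \<open>rho \<sigma> = 0\<close> show ?thesis
      by (simp add: pos_def)
  qed
  then show "rho \<sigma> = pos (rho \<sigma>tr - b)" "\<sigma> = return_stress \<sigma>tr (pm \<sigma>) (rho \<sigma>)"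
    using pm_dev_decomp[of \<sigma>] by (auto simp: return_stress_def)
qed

lemma return_stress_flow_rule:
  assumes "\<sigma>tr \<in> Sym" "b \<ge> 0" "\<rho> = pos (rho \<sigma>tr - b)"
  shows "\<exists>n \<in> subdiff_rho (return_stress \<sigma>tr p \<rho>).
           return_stress \<sigma>tr p \<rho> = \<sigma>tr - ((pm \<sigma>tr - p) *\<^sub>R Id3 + b *\<^sub>R n)"
proof (cases "\<rho> > 0")
  case True
  then have "\<rho> = rho \<sigma>tr - b" "rho \<sigma>tr > 0"
    using assms(2,3) by (auto simp: pos_def)
  define n where "n = (1 / rho \<sigma>tr) *\<^sub>R dev \<sigma>tr"
  have "rho (return_stress \<sigma>tr p \<rho>) = \<rho>"
    using True \<open>rho \<sigma>tr > 0\<close> by (intro rho_return_stress) auto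
  then have "n \<in> subdiff_rho (return_stress \<sigma>tr p \<rho>)"
    using True \<open>rho \<sigma>tr > 0\<close> by (simp add: subdiff_rho_def n_def dev_return_stress)
  moreover have "return_stress \<sigma>tr p \<rho> = \<sigma>tr - ((pm \<sigma>tr - p) *\<^sub>R Id3 + b *\<^sub>R n)"
  proof -
    have "\<sigma>tr - ((pm \<sigma>tr - p) *\<^sub>R Id3 + b *\<^sub>R n) = p *\<^sub>R Id3 + (dev \<sigma>tr - b *\<^sub>R n)"
      by (simp add: dev_def algebra_simps)
    also have "dev \<sigma>tr - b *\<^sub>R n = (1 - b / rho \<sigma>tr) *\<^sub>R dev \<sigma>tr"
      by (simp add: n_def scaleR_diff_left)
    also have "1 - b / rho \<sigma>tr = \<rho> / rho \<sigma>tr"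
      using \<open>\<rho> = rho \<sigma>tr - b\<close> \<open>rho \<sigma>tr > 0\<close> by (simp add: field_simps)
    finally show ?thesis
      using \<open>rho \<sigma>tr > 0\<close> by (simp add: return_stress_def)
  qed
  ultimately show ?thesis
    by blast
next
  case False
  then have "\<rho> = 0" "rho \<sigma>tr \<le> b"
    using assms(3) by (auto simp: pos_def)
  define n where "n = (1 / b) *\<^sub>R dev \<sigma>tr"
  have "rho (return_stress \<sigma>tr p \<rho>) = 0"
    using rho_return_stress[of \<rho> \<sigma>tr p] \<open>\<rho> = 0\<close> by simp
  moreover have "fnorm n \<le> 1"
    using \<open>rho \<sigma>tr \<le> b\<close> \<open>b \<ge> 0\<close> by (auto simp: n_def fnorm_eq_norm rho_eq_norm_dev divide_le_eq_1)
  moreover have "n \<in> Sym" "frob Id3 n = 0"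
    using Sym_dev[OF assms(1)] pm_dev[of \<sigma>tr] by (simp_all add: n_def Sym_scaleR pm_def frob_eq_inner)
  ultimately have "n \<in> subdiff_rho (return_stress \<sigma>tr p \<rho>)"
    by (simp add: subdiff_rho_def)
  moreover have "return_stress \<sigma>tr p \<rho> = \<sigma>tr - ((pm \<sigma>tr - p) *\<^sub>R Id3 + b *\<^sub>R n)"
  proof (cases "b = 0")
    case True
    then have "dev \<sigma>tr = 0"
      using \<open>rho \<sigma>tr \<le> b\<close> rho_nonneg[of \<sigma>tr] by (simp add: rho_eq_norm_dev)
    with True \<open>\<rho> = 0\<close> show ?thesis
      by (simp add: return_stress_def n_def dev_def[of \<sigma>tr] algebra_simps)
  next
    case False
    with \<open>\<rho> = 0\<close> show ?thesis
      by (simp add: return_stress_def n_def dev_def[of \<sigma>tr] algebra_simps)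
  qed
  ultimately show ?thesis
    by blast
qed

locale trial_stress = material_params +
  fixes e :: real and \<sigma>tr :: mat3
  assumes e_ge: "1/2 \<le> e" and e_le: "e \<le> 1" and \<sigma>tr_Sym: "\<sigma>tr \<in> Sym"
    and trial_yield: "fhat m0 fc (pm \<sigma>tr) (rho \<sigma>tr) (rho_e e \<sigma>tr) > 0"

sublocale trial_stress \<subseteq> trial_scalar K G m0 Ag Bg fc ft "pm \<sigma>tr" "rho \<sigma>tr" "r_e_tr e \<sigma>tr"
  using rho_nonneg r_e_tr_nonneg[OF e_ge e_le \<sigma>tr_Sym] trial_yield
  by unfold_locales (simp_all add: rho_e_eq_r_e_tr)

context trial_stress
begin

lemma q_tr_eq_yield_on_return: "\<gamma> \<ge> 0 \<Longrightarrow> q_tr K G m0 Ag Bg fc ft e \<sigma>tr \<gamma> = yield_on_return \<gamma>"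
  by (simp add: q_tr_def yield_on_return_def fhat_def rhohat_tr_eq_rho_return Let_def)

lemma probR_iff:
  "probR K G m0 Ag Bg fc ft e \<sigma>tr p \<rho> dl \<longleftrightarrow>
     dl > 0 \<and> yield_on_return dl = 0 \<and>
     p = phat_tr K Ag Bg fc ft (pm \<sigma>tr) dl \<and> \<rho> = rho_return (rho \<sigma>tr) dl"
  unfolding probR_def by (rule return_equations_iff)

lemma probP_imp_probR:
  assumes "probP K G m0 Ag Bg fc ft e \<sigma>tr \<sigma> dl"
  shows "probR K G m0 Ag Bg fc ft e \<sigma>tr (pm \<sigma>) (rho \<sigma>) dl" "\<sigma> = return_stress \<sigma>tr (pm \<sigma>) (rho \<sigma>)"
proof -
  define c where "c = 2 * G * (3 * rho \<sigma> / fc\<^sup>2 + m0 / (sqrt 6 * fc))"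
  obtain n where n: "n \<in> subdiff_rho \<sigma>"
    and \<sigma>: "\<sigma> = \<sigma>tr - ((dl * (K * mg' Ag Bg fc ft (pm \<sigma>) / fc)) *\<^sub>R Id3 + (dl * c) *\<^sub>R n)"
    and "dl \<ge> 0" and yield: "fhat m0 fc (pm \<sigma>) (rho \<sigma>) (rho_e e \<sigma>) \<le> 0"
    and compl: "dl * fhat m0 fc (pm \<sigma>) (rho \<sigma>) (rho_e e \<sigma>) = 0"
    using assms unfolding probP_def c_def by (auto simp: scaleR_add_right)
  have "dl \<noteq> 0"
    using \<sigma> yield trial_yield by auto
  moreover have "c \<ge> 0"
    using G_pos m0_pos fc_pos rho_nonneg[of \<sigma>] by (simp add: c_def)
  ultimately have flow: "pm \<sigma> = pm \<sigma>tr - dl * (K * mg' Ag Bg fc ft (pm \<sigma>) / fc)"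
      "rho \<sigma> = pos (rho \<sigma>tr - dl * c)" "\<sigma> = return_stress \<sigma>tr (pm \<sigma>) (rho \<sigma>)"
    using flow_rule_imp_return_stress[OF n \<sigma>] \<open>dl \<ge> 0\<close> by auto
  then show "\<sigma> = return_stress \<sigma>tr (pm \<sigma>) (rho \<sigma>)"
    by blast
  have "rho_e e \<sigma> = rho_e e (return_stress \<sigma>tr (pm \<sigma>) (rho \<sigma>))"
    using flow(3) by (rule arg_cong)
  also have "\<dots> = rho \<sigma> * r_e_tr e \<sigma>tr"
    using flow(2) \<open>dl \<ge> 0\<close> \<open>c \<ge> 0\<close>
    by (intro rho_e_return_stress rho_nonneg) (simp add: pos_def)
  finally have "fhat m0 fc (pm \<sigma>) (rho \<sigma>) (rho \<sigma> * r_e_tr e \<sigma>tr) = 0"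
    using compl \<open>dl \<noteq> 0\<close> by simp
  moreover have "dl * (K * mg' Ag Bg fc ft (pm \<sigma>) / fc) = dl * K * mg' Ag Bg fc ft (pm \<sigma>) / fc"
    "dl * c = dl * 2 * G * (3 * rho \<sigma> / fc\<^sup>2 + m0 / (sqrt 6 * fc))"
    by (simp_all add: c_def)
  ultimately show "probR K G m0 Ag Bg fc ft e \<sigma>tr (pm \<sigma>) (rho \<sigma>) dl"
    using flow(1,2) unfolding probR_def by metis
qed

lemma probR_imp_probP:
  assumes "probR K G m0 Ag Bg fc ft e \<sigma>tr p \<rho> dl"
  shows "probP K G m0 Ag Bg fc ft e \<sigma>tr (return_stress \<sigma>tr p \<rho>) dl"
proof -
  define c where "c = 2 * G * (3 * \<rho> / fc\<^sup>2 + m0 / (sqrt 6 * fc))"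
  have "dl > 0"
    using assms by (simp add: probR_iff)
  have p: "p = pm \<sigma>tr - dl * K * mg' Ag Bg fc ft p / fc"
    and \<rho>: "\<rho> = pos (rho \<sigma>tr - dl * 2 * G * (3 * \<rho> / fc\<^sup>2 + m0 / (sqrt 6 * fc)))"
    and yield: "fhat m0 fc p \<rho> (\<rho> * r_e_tr e \<sigma>tr) = 0"
    using assms unfolding probR_def by blast+
  have "pm \<sigma>tr - p = dl * (K * mg' Ag Bg fc ft p / fc)"
    using p by (simp add: algebra_simps)
  have "dl * 2 * G * (3 * \<rho> / fc\<^sup>2 + m0 / (sqrt 6 * fc)) = dl * c"
    by (simp add: c_def)
  with \<rho> have \<rho>_c: "\<rho> = pos (rho \<sigma>tr - dl * c)"
    by simp
  then have "\<rho> \<ge> 0"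
    by (simp add: pos_def)
  then have "dl * c \<ge> 0"
    using \<open>dl > 0\<close> G_pos m0_pos fc_pos by (simp add: c_def)
  then have "rho \<sigma>tr = 0 \<Longrightarrow> \<rho> = 0"
    using \<rho>_c by (simp add: pos_def)
  define \<sigma> where "\<sigma> = return_stress \<sigma>tr p \<rho>"
  have stress: "pm \<sigma> = p" "rho \<sigma> = \<rho>" "rho_e e \<sigma> = \<rho> * r_e_tr e \<sigma>tr"
    unfolding \<sigma>_def using pm_return_stress rho_return_stress[OF \<open>\<rho> \<ge> 0\<close> \<open>rho \<sigma>tr = 0 \<Longrightarrow> \<rho> = 0\<close>]
      rho_e_return_stress[OF \<open>\<rho> \<ge> 0\<close> \<open>rho \<sigma>tr = 0 \<Longrightarrow> \<rho> = 0\<close>] by blast+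
  obtain n where "n \<in> subdiff_rho \<sigma>" and flow: "\<sigma> = \<sigma>tr - ((pm \<sigma>tr - p) *\<^sub>R Id3 + (dl * c) *\<^sub>R n)"
    using return_stress_flow_rule[OF \<sigma>tr_Sym \<open>dl * c \<ge> 0\<close> \<rho>_c] unfolding \<sigma>_def by blast
  moreover have "\<sigma> = \<sigma>tr - dl *\<^sub>R ((K * mg' Ag Bg fc ft (pm \<sigma>) / fc) *\<^sub>R Id3
      + (2 * G * (3 * rho \<sigma> / fc\<^sup>2 + m0 / (sqrt 6 * fc))) *\<^sub>R n)"
    unfolding stress c_def[symmetric] using flow \<open>pm \<sigma>tr - p = dl * (K * mg' Ag Bg fc ft p / fc)\<close>
    by (simp add: scaleR_add_right)
  ultimately have "\<exists>n \<in> subdiff_rho \<sigma>. \<sigma> = \<sigma>tr - dl *\<^sub>R ((K * mg' Ag Bg fc ft (pm \<sigma>) / fc) *\<^sub>R Id3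
      + (2 * G * (3 * rho \<sigma> / fc\<^sup>2 + m0 / (sqrt 6 * fc))) *\<^sub>R n)"
    by blast
  moreover have "\<sigma> \<in> Sym"
    unfolding \<sigma>_def by (rule Sym_return_stress[OF \<sigma>tr_Sym])
  ultimately show ?thesis
    using \<open>dl > 0\<close> yield unfolding probP_def stress \<sigma>_def[symmetric] by simp
qed

lemma probR_ex1: "\<exists>!(p, \<rho>, dl). probR K G m0 Ag Bg fc ft e \<sigma>tr p \<rho> dl"
proof -
  obtain dl where "dl > 0" "yield_on_return dl = 0"
    using yield_on_return_ex1_root by blast
  with yield_on_return_ex1_root show ?thesis
    unfolding probR_iff
    by (intro ex1I[of _ "(phat_tr K Ag Bg fc ft (pm \<sigma>tr) dl, rho_return (rho \<sigma>tr) dl, dl)"]) auto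
qed

lemma probP_ex1: "\<exists>!(\<sigma>, dl). probP K G m0 Ag Bg fc ft e \<sigma>tr \<sigma> dl"
proof -
  obtain p \<rho> dl where R: "probR K G m0 Ag Bg fc ft e \<sigma>tr p \<rho> dl"
    and R_unique: "\<And>p' \<rho>' dl'. probR K G m0 Ag Bg fc ft e \<sigma>tr p' \<rho>' dl' \<Longrightarrow> (p', \<rho>', dl') = (p, \<rho>, dl)"
    using probR_ex1 by (auto simp: Ex1_def)
  show ?thesis
  proof (rule ex1I[of _ "(return_stress \<sigma>tr p \<rho>, dl)"])
    show "case (return_stress \<sigma>tr p \<rho>, dl) of (\<sigma>, dl) \<Rightarrow> probP K G m0 Ag Bg fc ft e \<sigma>tr \<sigma> dl"
      using probR_imp_probP[OF R] by simp
  next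
    fix x
    assume "case x of (\<sigma>, dl) \<Rightarrow> probP K G m0 Ag Bg fc ft e \<sigma>tr \<sigma> dl"
    then obtain \<sigma> dl' where "x = (\<sigma>, dl')" "probP K G m0 Ag Bg fc ft e \<sigma>tr \<sigma> dl'"
      by (cases x) auto
    then have "(pm \<sigma>, rho \<sigma>, dl') = (p, \<rho>, dl)" and \<sigma>: "\<sigma> = return_stress \<sigma>tr (pm \<sigma>) (rho \<sigma>)"
      using probP_imp_probR R_unique by blast+
    then have "\<sigma> = return_stress \<sigma>tr p \<rho>" "dl' = dl"
      by simp_all
    with \<open>x = (\<sigma>, dl')\<close> show "x = (return_stress \<sigma>tr p \<rho>, dl)"
      by simp
  qed
qed

lemma q_tr_ex1_root: "\<exists>!dl. dl > 0 \<and> q_tr K G m0 Ag Bg fc ft e \<sigma>tr dl = 0"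
  using yield_on_return_ex1_root q_tr_eq_yield_on_return
  by (metis (no_types, lifting) less_imp_le)

lemma q_tr_root_less_apex_iff:
  assumes "dl > 0" "q_tr K G m0 Ag Bg fc ft e \<sigma>tr dl = 0"
  shows "dl < apex_multiplier (rho \<sigma>tr) \<longleftrightarrow>
    q_tr K G m0 Ag Bg fc ft e \<sigma>tr (apex_multiplier (rho \<sigma>tr)) < 0"
  using assms root_less_apex_multiplier_iff apex_multiplier_nonneg[OF rho_nonneg]
  by (simp add: q_tr_eq_yield_on_return)

lemma probR_imp_q_tr_root:
  assumes "probR K G m0 Ag Bg fc ft e \<sigma>tr p \<rho> dl"
  shows "dl > 0" "q_tr K G m0 Ag Bg fc ft e \<sigma>tr dl = 0"
    "\<rho> \<ge> 0" "\<rho> = 0 \<longleftrightarrow> apex_multiplier (rho \<sigma>tr) \<le> dl"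
  using assms rho_return_nonneg rho_return_eq_0_iff
  by (auto simp: probR_iff q_tr_eq_yield_on_return)

end

theorem theorem6:
  fixes K G m0 Ag Bg fc ft e :: real and \<sigma>tr :: mat3
  assumes "K > 0" "G > 0" "m0 > 0" "Ag > 0" "Bg > 0" "fc > 0" "ft > 0"
    and "1/2 \<le> e" "e \<le> 1"
    and "\<sigma>tr \<in> Sym"
    and "fhat m0 fc (pm \<sigma>tr) (rho \<sigma>tr) (rho_e e \<sigma>tr) > 0"
  shows "(\<exists>!dl. dl > 0 \<and> q_tr K G m0 Ag Bg fc ft e \<sigma>tr dl = 0)
    \<and> (\<exists>!(p, \<rho>, dl). probR K G m0 Ag Bg fc ft e \<sigma>tr p \<rho> dl)
    \<and> (\<exists>!(\<sigma>, dl). probP K G m0 Ag Bg fc ft e \<sigma>tr \<sigma> dl)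
    \<and> (let T = sqrt 6 * fc * rho \<sigma>tr / (2 * G * m0) in
        (q_tr K G m0 Ag Bg fc ft e \<sigma>tr T < 0 \<longrightarrow>
           (\<forall>dl. dl > 0 \<and> q_tr K G m0 Ag Bg fc ft e \<sigma>tr dl = 0 \<longrightarrow> dl < T) \<and>
           (\<forall>p \<rho> dl. probR K G m0 Ag Bg fc ft e \<sigma>tr p \<rho> dl \<longrightarrow> 0 < dl \<and> dl < T \<and> \<rho> > 0))
      \<and> (q_tr K G m0 Ag Bg fc ft e \<sigma>tr T \<ge> 0 \<longrightarrow>
           (\<forall>dl. dl > 0 \<and> q_tr K G m0 Ag Bg fc ft e \<sigma>tr dl = 0 \<longrightarrow> dl \<ge> T) \<and>
           (\<forall>p \<rho> dl. probR K G m0 Ag Bg fc ft e \<sigma>tr p \<rho> dl \<longrightarrow> dl \<ge> T \<and> \<rho> = 0)))"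
proof -
  interpret trial_stress K G m0 Ag Bg fc ft e \<sigma>tr
    using assms by unfold_locales
  show ?thesis
    unfolding Let_def apex_multiplier_def[symmetric]
    using q_tr_ex1_root probR_ex1 probP_ex1 q_tr_root_less_apex_iff probR_imp_q_tr_root
    by (smt (verit))
qed

end
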